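(* Let $\mathbb{F}$ be a field, $\prec$ a term order on the monomials of $\mathbb{F}[x_1,\ldots,x_n]$, $\mathcal{F}\subseteq\mathbb{F}^n$ a finite set, $h\in\mathbb{F}^n\setminus\mathcal{F}$, and $\mathcal{T}:=\mathcal{F}\cup\{h\}$. Let $\{g_1,\ldots,g_s\}$ be the reduced Gröbner basis of $I(\mathcal{F})$ with respect to $\prec$, indexed so that $m_1\prec m_2\prec\cdots\prec m_s$ where $m_j:=\mathrm{lm}_\prec(g_j)$. Let $i:=\min\{j: g_j(h)\ne 0\}$. Then $\mathrm{Sm}(\prec,\mathcal{T})=\mathrm{Sm}(\prec,\mathcal{F})\cup\{m_i\}$.
   Context: $I(\mathcal{F})$ is the ideal of polynomials vanishing on $\mathcal{F}$; $\mathrm{lm}_\prec(f)$ is the $\prec$-largest monomial of $f$ with nonzero coefficient; $\mathrm{Sm}(\prec,\mathcal{F})$ is the set of monomials that are not leading monomials of nonzero elements of $I(\mathcal{F})$. A Gröbner basis $\{g_1,\dots,g_s\}$ of an ideal $I$ is a finite subset of $I$ whose leading monomials generate the monomial ideal of all leading monomials of $I$; it is reduced if each $\mathrm{lm}(g_j)$ has coefficient 1 and no monomial of $g_j$ is divisible by $\mathrm{lm}(g_l)$ for $l\ne j$. *)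

theory Defs
  imports Main "HOL-Library.Poly_Mapping"
begin

text \<open>Multivariate polynomials in the variables x_0, ..., x_(n-1) over a field:
  monomials are exponent vectors (finitely supported maps nat to nat) supported in {..<n},
  polynomials are finitely supported maps from monomials to coefficients.
  Points of F^n are lists of length n.\<close>

type_synonym monom = "nat \<Rightarrow>\<^sub>0 nat"
type_synonym 'a mpoly = "monom \<Rightarrow>\<^sub>0 'a"

definition monoms :: "nat \<Rightarrow> monom set" where
  "monoms n = {m. Poly_Mapping.keys m \<subseteq> {..<n}}"

definition polys :: "nat \<Rightarrow> ('a::zero) mpoly set" where
  "polys n = {p. Poly_Mapping.keys p \<subseteq> monoms n}"

definition mdvd :: "monom \<Rightarrow> monom \<Rightarrow> bool" where
  "mdvd a b \<longleftrightarrow> (\<forall>i. Poly_Mapping.lookup a i \<le> Poly_Mapping.lookup b i)"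

definition eval_mpoly :: "('a::field) mpoly \<Rightarrow> 'a list \<Rightarrow> 'a" where
  "eval_mpoly p x = (\<Sum>m\<in>Poly_Mapping.keys p. Poly_Mapping.lookup p m * (\<Prod>i\<in>Poly_Mapping.keys m. (x ! i) ^ Poly_Mapping.lookup m i))"

definition vanish_ideal :: "nat \<Rightarrow> ('a::field) list set \<Rightarrow> 'a mpoly set" where
  "vanish_ideal n F = {p \<in> polys n. \<forall>x\<in>F. eval_mpoly p x = 0}"

text \<open>A term order (given as its reflexive version \<preceq>) on the monomials in n variables.\<close>
definition term_order :: "nat \<Rightarrow> (monom \<Rightarrow> monom \<Rightarrow> bool) \<Rightarrow> bool" where
  "term_order n ord \<longleftrightarrow>
     (\<forall>a\<in>monoms n. ord a a) \<and>
     (\<forall>a\<in>monoms n. \<forall>b\<in>monoms n. ord a b \<and> ord b a \<longrightarrow> a = b) \<and>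
     (\<forall>a\<in>monoms n. \<forall>b\<in>monoms n. \<forall>c\<in>monoms n. ord a b \<and> ord b c \<longrightarrow> ord a c) \<and>
     (\<forall>a\<in>monoms n. \<forall>b\<in>monoms n. ord a b \<or> ord b a) \<and>
     (\<forall>a\<in>monoms n. ord 0 a) \<and>
     (\<forall>a\<in>monoms n. \<forall>b\<in>monoms n. \<forall>c\<in>monoms n. ord a b \<longrightarrow> ord (a + c) (b + c))"

definition strict_ord :: "(monom \<Rightarrow> monom \<Rightarrow> bool) \<Rightarrow> monom \<Rightarrow> monom \<Rightarrow> bool" where
  "strict_ord ord a b \<longleftrightarrow> ord a b \<and> a \<noteq> b"

definition lm :: "(monom \<Rightarrow> monom \<Rightarrow> bool) \<Rightarrow> ('a::zero) mpoly \<Rightarrow> monom" where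
  "lm ord p = (THE m. m \<in> Poly_Mapping.keys p \<and> (\<forall>m'\<in>Poly_Mapping.keys p. ord m' m))"

definition lc :: "(monom \<Rightarrow> monom \<Rightarrow> bool) \<Rightarrow> ('a::zero) mpoly \<Rightarrow> 'a" where
  "lc ord p = Poly_Mapping.lookup p (lm ord p)"

definition Sm :: "nat \<Rightarrow> (monom \<Rightarrow> monom \<Rightarrow> bool) \<Rightarrow> ('a::field) list set \<Rightarrow> monom set" where
  "Sm n ord F = {m \<in> monoms n. \<not> (\<exists>f\<in>vanish_ideal n F. f \<noteq> 0 \<and> lm ord f = m)}"

definition groebner_basis ::
  "(monom \<Rightarrow> monom \<Rightarrow> bool) \<Rightarrow> ('a::field) mpoly set \<Rightarrow> 'a mpoly set \<Rightarrow> bool" where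
  "groebner_basis ord I G \<longleftrightarrow> finite G \<and> G \<subseteq> I \<and> 0 \<notin> G \<and>
     (\<forall>f\<in>I. f \<noteq> 0 \<longrightarrow> (\<exists>g\<in>G. mdvd (lm ord g) (lm ord f)))"

definition reduced_groebner_basis ::
  "(monom \<Rightarrow> monom \<Rightarrow> bool) \<Rightarrow> ('a::field) mpoly set \<Rightarrow> 'a mpoly set \<Rightarrow> bool" where
  "reduced_groebner_basis ord I G \<longleftrightarrow> groebner_basis ord I G \<and>
     (\<forall>g\<in>G. lc ord g = 1) \<and>
     (\<forall>g\<in>G. \<forall>g'\<in>G. g' \<noteq> g \<longrightarrow> (\<forall>m\<in>Poly_Mapping.keys g. \<not> mdvd (lm ord g') m))"

end

theory Submission
  imports Defs "HOL-Library.Ramsey"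
begin

text \<open>Let \<open>q\<close> be the basis element whose leading monomial \<open>m\<close> is \<open>\<prec>\<close>-least among those not
  vanishing at \<open>h\<close>. Division by a Gr\<ouml>bner basis shows: if every basis element whose leading
  monomial lies in a \<open>\<prec>\<close>-downset \<open>D\<close> vanishes at \<open>h\<close>, then so does every \<open>f \<in> I(F)\<close> supported
  in \<open>D\<close>. With \<open>D = {k. k \<prec> m}\<close> this shows that no element of \<open>I(T)\<close> has leading monomial \<open>m\<close>,
  since subtracting a multiple of \<open>q\<close> would give an element of \<open>I(F)\<close> supported below \<open>m\<close> not
  vanishing at \<open>h\<close>. Conversely, a leading monomial \<open>m' \<noteq> m\<close> of \<open>I(F)\<close> stays one of \<open>I(T)\<close>:
  if \<open>m' \<prec> m\<close> it is the leading monomial of a multiple of a basis element vanishing at \<open>h\<close>,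
  and if \<open>m \<prec> m'\<close> subtracting a scalar multiple of \<open>q\<close> corrects the value at \<open>h\<close> without
  touching the leading term.\<close>

section \<open>Polynomial arithmetic and evaluation\<close>

lemma monoms_zero: "0 \<in> monoms n"
  unfolding monoms_def by simp

lemma monoms_add: "a \<in> monoms n \<Longrightarrow> b \<in> monoms n \<Longrightarrow> a + b \<in> monoms n"
  unfolding monoms_def using keys_add[of a b] by auto

lemma monoms_diff: "a \<in> monoms n \<Longrightarrow> a - b \<in> monoms n"
proof -
  have "Poly_Mapping.keys (a - b) \<subseteq> Poly_Mapping.keys a"
    by (auto simp: in_keys_iff lookup_minus)
  then show "a \<in> monoms n \<Longrightarrow> a - b \<in> monoms n" unfolding monoms_def by auto
qed

lemma mdvd_refl: "mdvd a a"
  unfolding mdvd_def by simp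

lemma mdvd_add_diff: "mdvd a b \<Longrightarrow> a + (b - a) = b"
  unfolding mdvd_def by (intro poly_mapping_eqI) (simp add: lookup_add lookup_minus)

lemma polys_diff: "p \<in> polys n \<Longrightarrow> q \<in> polys n \<Longrightarrow> p - (q :: 'a::ab_group_add mpoly) \<in> polys n"
  unfolding polys_def using keys_diff[of p q] by blast

lemma lookup_single_mult_add:
  "Poly_Mapping.lookup (Poly_Mapping.single d c * p) (d + m) = c * Poly_Mapping.lookup (p :: 'a::semiring_0 mpoly) m"
  by (simp add: lookup_mult lookup_single when_mult mult_when Sum_any_right_distrib)

lemma keys_single_mult:
  "Poly_Mapping.keys (Poly_Mapping.single d c * p) \<subseteq> (+) d ` Poly_Mapping.keys (p :: 'a::semiring_0 mpoly)"
  using keys_mult[of "Poly_Mapping.single d c" p] by (auto split: if_splits)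

lemma keys_single_mult_eq:
  "c \<noteq> 0 \<Longrightarrow> Poly_Mapping.keys (Poly_Mapping.single d c * p) = (+) d ` Poly_Mapping.keys (p :: 'a::semiring_no_zero_divisors mpoly)"
  using keys_single_mult[of d c p] by (auto simp: in_keys_iff lookup_single_mult_add)

lemma polys_single_mult:
  "d \<in> monoms n \<Longrightarrow> p \<in> polys n \<Longrightarrow> Poly_Mapping.single d c * (p :: 'a::semiring_0 mpoly) \<in> polys n"
  unfolding polys_def using keys_single_mult[of d c p] monoms_add by blast

definition eval_monom :: "monom \<Rightarrow> 'a::field list \<Rightarrow> 'a" where
  "eval_monom m x = (\<Prod>i\<in>Poly_Mapping.keys m. (x ! i) ^ Poly_Mapping.lookup m i)"

lemma eval_mpoly_eq_sum:
  "eval_mpoly p x = (\<Sum>m\<in>Poly_Mapping.keys p. Poly_Mapping.lookup p m * eval_monom m x)"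
  unfolding eval_mpoly_def eval_monom_def ..

lemma eval_monom_superset:
  assumes "finite K" "Poly_Mapping.keys m \<subseteq> K"
  shows "eval_monom m x = (\<Prod>i\<in>K. (x ! i) ^ Poly_Mapping.lookup m i)"
  unfolding eval_monom_def by (rule prod.mono_neutral_left[OF assms]) (auto simp: in_keys_iff)

lemma eval_monom_add: "eval_monom (a + b) x = eval_monom a x * eval_monom b x"
proof -
  let ?K = "Poly_Mapping.keys a \<union> Poly_Mapping.keys b"
  have "eval_monom (a + b) x = (\<Prod>i\<in>?K. (x ! i) ^ Poly_Mapping.lookup (a + b) i)"
    by (rule eval_monom_superset) (use keys_add[of a b] in auto)
  also have "\<dots> = (\<Prod>i\<in>?K. (x ! i) ^ Poly_Mapping.lookup a i * (x ! i) ^ Poly_Mapping.lookup b i)"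
    by (simp add: lookup_add power_add)
  also have "\<dots> = eval_monom a x * eval_monom b x"
    by (simp add: prod.distrib eval_monom_superset[of ?K a] eval_monom_superset[of ?K b])
  finally show ?thesis .
qed

lemma eval_mpoly_superset:
  assumes "finite K" "Poly_Mapping.keys p \<subseteq> K"
  shows "eval_mpoly p x = (\<Sum>m\<in>K. Poly_Mapping.lookup p m * eval_monom m x)"
  unfolding eval_mpoly_eq_sum by (rule sum.mono_neutral_left[OF assms]) (auto simp: in_keys_iff)

lemma eval_mpoly_zero [simp]: "eval_mpoly 0 x = 0"
  unfolding eval_mpoly_def by simp

lemma eval_mpoly_one [simp]: "eval_mpoly 1 x = 1"
  by (simp add: eval_mpoly_eq_sum eval_monom_def)

lemma eval_mpoly_diff: "eval_mpoly (p - q) x = eval_mpoly p x - eval_mpoly q x"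
proof -
  let ?K = "Poly_Mapping.keys p \<union> Poly_Mapping.keys q"
  have "eval_mpoly (p - q) x = (\<Sum>m\<in>?K. Poly_Mapping.lookup (p - q) m * eval_monom m x)"
    by (rule eval_mpoly_superset) (use keys_diff[of p q] in auto)
  also have "\<dots> = eval_mpoly p x - eval_mpoly q x"
    by (simp add: lookup_minus left_diff_distrib sum_subtractf
        eval_mpoly_superset[of ?K p] eval_mpoly_superset[of ?K q])
  finally show ?thesis .
qed

lemma eval_mpoly_single_mult:
  "eval_mpoly (Poly_Mapping.single d c * p) x = c * eval_monom d x * eval_mpoly p x"
proof -
  have inj: "inj_on ((+) d) (Poly_Mapping.keys p)" by (rule inj_onI) simp
  have "eval_mpoly (Poly_Mapping.single d c * p) x
      = (\<Sum>k\<in>(+) d ` Poly_Mapping.keys p. Poly_Mapping.lookup (Poly_Mapping.single d c * p) k * eval_monom k x)"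
    by (rule eval_mpoly_superset) (use keys_single_mult[of d c p] in auto)
  also have "\<dots> = (\<Sum>m\<in>Poly_Mapping.keys p. c * eval_monom d x * (Poly_Mapping.lookup p m * eval_monom m x))"
    by (simp add: sum.reindex[OF inj] lookup_single_mult_add eval_monom_add)
       (simp add: mult_ac)
  also have "\<dots> = c * eval_monom d x * eval_mpoly p x"
    by (simp add: eval_mpoly_eq_sum sum_distrib_left)
  finally show ?thesis .
qed

lemma vanish_ideal_diff:
  "p \<in> vanish_ideal n F \<Longrightarrow> q \<in> vanish_ideal n F \<Longrightarrow> p - q \<in> vanish_ideal n F"
  unfolding vanish_ideal_def by (auto simp: polys_diff eval_mpoly_diff)

lemma vanish_ideal_single_mult:
  "d \<in> monoms n \<Longrightarrow> p \<in> vanish_ideal n F \<Longrightarrow> Poly_Mapping.single d c * p \<in> vanish_ideal n F"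
  unfolding vanish_ideal_def by (auto simp: polys_single_mult eval_mpoly_single_mult)

lemma vanish_ideal_antimono: "F \<subseteq> T \<Longrightarrow> vanish_ideal n T \<subseteq> vanish_ideal n F"
  unfolding vanish_ideal_def by auto

lemma vanish_ideal_insert:
  "vanish_ideal n (insert h F) = {p \<in> vanish_ideal n F. eval_mpoly p h = 0}"
  unfolding vanish_ideal_def by auto

lemma groebner_basis_vanish_idealD:
  assumes "groebner_basis ord (vanish_ideal n F) G" "g \<in> G"
  shows "g \<in> vanish_ideal n F" and "g \<in> polys n" and "g \<noteq> 0"
  using assms unfolding groebner_basis_def vanish_ideal_def by auto

lemma Sm_mono: "F \<subseteq> T \<Longrightarrow> Sm n ord F \<subseteq> Sm n ord T"
  unfolding Sm_def using vanish_ideal_antimono by blast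

lemma exists_poly_separating_point:
  assumes "finite F" "\<forall>x\<in>F. length x = n" "length h = n" "h \<notin> F"
  shows "\<exists>p\<in>polys n. (\<forall>x\<in>F. eval_mpoly p x = 0) \<and> eval_mpoly p h \<noteq> (0 :: 'a::field)"
  using assms
proof (induction F rule: finite_induct)
  case empty
  have "(1 :: 'a mpoly) \<in> polys n" unfolding polys_def using monoms_zero by auto
  then show ?case by (intro bexI[of _ 1]) auto
next
  case (insert y F)
  then obtain p where p: "p \<in> polys n" "\<forall>x\<in>F. eval_mpoly p x = 0" "eval_mpoly p h \<noteq> 0"
    by auto
  have "\<exists>k<n. y ! k \<noteq> h ! k"
  proof (rule ccontr)
    assume "\<not> (\<exists>k<n. y ! k \<noteq> h ! k)"
    then have "y = h" using insert.prems(1,2) by (intro nth_equalityI) auto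
    then show False using insert.prems(3) by simp
  qed
  then obtain k where k: "k < n" "y ! k \<noteq> h ! k" by blast
  \<comment> \<open>the product \<open>(x\<^sub>k - y\<^sub>k) p\<close>\<close>
  define q where "q = Poly_Mapping.single (Poly_Mapping.single k 1) 1 * p - Poly_Mapping.single 0 (y ! k) * p"
  have eval_q: "eval_mpoly q x = (x ! k - y ! k) * eval_mpoly p x" for x
    by (simp add: q_def eval_mpoly_diff eval_mpoly_single_mult eval_monom_def left_diff_distrib)
  have "Poly_Mapping.single k 1 \<in> monoms n" unfolding monoms_def using k by auto
  then have "q \<in> polys n" unfolding q_def using polys_diff polys_single_mult monoms_zero p(1) by blast
  moreover have "\<forall>x\<in>insert y F. eval_mpoly q x = 0" using eval_q p(2) by simp
  moreover have "eval_mpoly q h \<noteq> 0" using eval_q p(3) k(2) by simp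
  ultimately show ?case by blast
qed

section \<open>Term orders and leading monomials\<close>

locale term_order_on =
  fixes n :: nat and ord :: "monom \<Rightarrow> monom \<Rightarrow> bool"
  assumes term_order: "term_order n ord"
begin

lemma ord_refl: "a \<in> monoms n \<Longrightarrow> ord a a"
  using term_order unfolding term_order_def by blast

lemma ord_antisym: "a \<in> monoms n \<Longrightarrow> b \<in> monoms n \<Longrightarrow> ord a b \<Longrightarrow> ord b a \<Longrightarrow> a = b"
  using term_order unfolding term_order_def by blast

lemma ord_trans:
  "a \<in> monoms n \<Longrightarrow> b \<in> monoms n \<Longrightarrow> c \<in> monoms n \<Longrightarrow> ord a b \<Longrightarrow> ord b c \<Longrightarrow> ord a c"
  using term_order unfolding term_order_def by blast

lemma ord_total: "a \<in> monoms n \<Longrightarrow> b \<in> monoms n \<Longrightarrow> ord a b \<or> ord b a"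
  using term_order unfolding term_order_def by blast

lemma ord_zero: "a \<in> monoms n \<Longrightarrow> ord 0 a"
  using term_order unfolding term_order_def by blast

lemma ord_add_left:
  "a \<in> monoms n \<Longrightarrow> b \<in> monoms n \<Longrightarrow> c \<in> monoms n \<Longrightarrow> ord a b \<Longrightarrow> ord (c + a) (c + b)"
  using term_order unfolding term_order_def by (metis add.commute)

lemma strict_ord_ord_trans:
  "a \<in> monoms n \<Longrightarrow> b \<in> monoms n \<Longrightarrow> c \<in> monoms n \<Longrightarrow> ord a b \<Longrightarrow> strict_ord ord b c \<Longrightarrow> strict_ord ord a c"
  unfolding strict_ord_def by (metis ord_antisym ord_trans)

lemma strict_ord_trans:
  "a \<in> monoms n \<Longrightarrow> b \<in> monoms n \<Longrightarrow> c \<in> monoms n \<Longrightarrow> strict_ord ord a b \<Longrightarrow> strict_ord ord b c \<Longrightarrow> strict_ord ord a c"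
  using strict_ord_ord_trans strict_ord_def by blast

lemma strict_ord_asym: "a \<in> monoms n \<Longrightarrow> b \<in> monoms n \<Longrightarrow> strict_ord ord a b \<Longrightarrow> \<not> ord b a"
  unfolding strict_ord_def using ord_antisym by blast

lemma mdvd_imp_ord: "a \<in> monoms n \<Longrightarrow> b \<in> monoms n \<Longrightarrow> mdvd a b \<Longrightarrow> ord a b"
  using ord_add_left[OF monoms_zero monoms_diff _ ord_zero[OF monoms_diff]] mdvd_add_diff
  by (metis add.right_neutral)

lemma exists_ord_max:
  assumes "finite K" "K \<noteq> {}" "K \<subseteq> monoms n"
  shows "\<exists>m\<in>K. \<forall>k\<in>K. ord k m"
  using assms
proof (induction K rule: finite_ne_induct)
  case (singleton x)
  then show ?case using ord_refl by auto
next
  case (insert x K)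
  then obtain m where m: "m \<in> K" "\<forall>k\<in>K. ord k m" by auto
  show ?case
  proof (cases "ord x m")
    case True
    then show ?thesis using m by auto
  next
    case False
    then have "ord m x" using ord_total insert.prems m(1) by blast
    then show ?thesis using m insert.prems ord_refl ord_trans by (metis insert_iff insert_subset subsetD)
  qed
qed

lemma lm_eqI:
  assumes "Poly_Mapping.keys p \<subseteq> monoms n" "m \<in> Poly_Mapping.keys p" "\<forall>k\<in>Poly_Mapping.keys p. ord k m"
  shows "lm ord p = m"
  unfolding lm_def using assms ord_antisym by (intro the_equality) blast+

lemma
  assumes "p \<in> polys n" "p \<noteq> 0"
  shows lm_in_keys: "lm ord p \<in> Poly_Mapping.keys p"
    and ord_lm: "k \<in> Poly_Mapping.keys p \<Longrightarrow> ord k (lm ord p)"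
    and lm_in_monoms: "lm ord p \<in> monoms n"
proof -
  have keys: "Poly_Mapping.keys p \<subseteq> monoms n" using assms(1) unfolding polys_def by auto
  obtain m where m: "m \<in> Poly_Mapping.keys p" "\<forall>k\<in>Poly_Mapping.keys p. ord k m"
    using exists_ord_max[OF finite_keys _ keys] assms(2) by auto
  then have "lm ord p = m" using lm_eqI[OF keys] by blast
  then show "lm ord p \<in> Poly_Mapping.keys p" "k \<in> Poly_Mapping.keys p \<Longrightarrow> ord k (lm ord p)"
      "lm ord p \<in> monoms n"
    using m keys by auto
qed

lemma lc_nonzero: "p \<in> polys n \<Longrightarrow> p \<noteq> 0 \<Longrightarrow> lc ord p \<noteq> 0"
  unfolding lc_def using lm_in_keys by (simp add: in_keys_iff)

text \<open>A strict descent \<open>a \<prec> b\<close> forces \<open>lookup a k < lookup b k\<close> for some variable \<open>k < n\<close>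
  (otherwise \<open>b\<close> would divide \<open>a\<close>), so the strict order is contained in a finite union of
  well-founded relations; being transitive, it is well-founded by Ramsey's theorem.\<close>
lemma wf_strict_ord: "wf {(a, b). a \<in> monoms n \<and> b \<in> monoms n \<and> strict_ord ord a b}"
  (is "wf ?R")
proof (rule trans_disj_wf_implies_wf)
  show "trans ?R"
    by (rule transI) (auto intro: strict_ord_trans)
  have "?R \<subseteq> (\<Union>k<n. inv_image less_than (\<lambda>a. Poly_Mapping.lookup a k))"
  proof safe
    fix a b assume ab: "a \<in> monoms n" "b \<in> monoms n" "strict_ord ord a b"
    then have "\<not> mdvd b a" using mdvd_imp_ord strict_ord_asym by blast
    then obtain k where k: "Poly_Mapping.lookup a k < Poly_Mapping.lookup b k"
      unfolding mdvd_def by (auto simp: not_le)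
    then have "k \<in> Poly_Mapping.keys b" by (auto simp: in_keys_iff)
    then have "k < n" using ab(2) unfolding monoms_def by auto
    then show "(a, b) \<in> (\<Union>k<n. inv_image less_than (\<lambda>a. Poly_Mapping.lookup a k))" using k by auto
  qed
  then show "disj_wf ?R"
    unfolding disj_wf by (intro exI[of _ "\<lambda>k. inv_image less_than (\<lambda>a. Poly_Mapping.lookup a k)"] exI) auto
qed

lemma lm_single_mult:
  fixes p :: "'a::semiring_no_zero_divisors mpoly"
  assumes "d \<in> monoms n" "c \<noteq> 0" "p \<in> polys n" "p \<noteq> 0"
  shows "lm ord (Poly_Mapping.single d c * p) = d + lm ord p"
proof (rule lm_eqI)
  have "ord (d + k) (d + lm ord p)" if "k \<in> Poly_Mapping.keys p" for k
    using ord_add_left[OF _ lm_in_monoms[OF assms(3,4)] assms(1) ord_lm[OF assms(3,4) that]]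
      that assms(3) unfolding polys_def by auto
  then show "\<forall>k\<in>Poly_Mapping.keys (Poly_Mapping.single d c * p). ord k (d + lm ord p)"
    using keys_single_mult_eq[OF assms(2)] by auto
  show "d + lm ord p \<in> Poly_Mapping.keys (Poly_Mapping.single d c * p)"
    using keys_single_mult_eq[OF assms(2)] lm_in_keys[OF assms(3,4)] by auto
  show "Poly_Mapping.keys (Poly_Mapping.single d c * p) \<subseteq> monoms n"
    using polys_single_mult[OF assms(1,3)] unfolding polys_def by auto
qed

lemma keys_cancel_lead_below:
  fixes p q :: "'a::field mpoly"
  assumes p: "p \<in> polys n" "p \<noteq> 0" and q: "q \<in> polys n" "q \<noteq> 0" and dvd: "mdvd (lm ord q) (lm ord p)"
  defines "p' \<equiv> p - Poly_Mapping.single (lm ord p - lm ord q) (lc ord p / lc ord q) * q"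
  shows "k \<in> Poly_Mapping.keys p' \<Longrightarrow> strict_ord ord k (lm ord p)"
proof -
  let ?d = "lm ord p - lm ord q" and ?c = "lc ord p / lc ord q"
  have d: "?d \<in> monoms n" using monoms_diff lm_in_monoms[OF p] by blast
  have c: "?c \<noteq> 0" using lc_nonzero[OF p] lc_nonzero[OF q] by simp
  have shift: "?d + lm ord q = lm ord p" using mdvd_add_diff[OF dvd] by (simp add: add.commute)
  assume k: "k \<in> Poly_Mapping.keys p'"
  consider "k \<in> Poly_Mapping.keys p" | k' where "k' \<in> Poly_Mapping.keys q" "k = ?d + k'"
    using k keys_diff[of p "Poly_Mapping.single ?d ?c * q"] keys_single_mult_eq[OF c]
    unfolding p'_def by blast
  then have "ord k (lm ord p)"
  proof cases
    case 1
    then show ?thesis by (rule ord_lm[OF p])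
  next
    case 2
    then show ?thesis
      using ord_add_left[OF _ lm_in_monoms[OF q] d ord_lm[OF q]] q(1) shift
      unfolding polys_def by auto
  qed
  moreover have "Poly_Mapping.lookup p' (lm ord p) = 0"
    using lookup_single_mult_add[of ?d ?c q "lm ord q"] lc_nonzero[OF q]
    by (simp add: p'_def shift lookup_minus lc_def)
  with k have "k \<noteq> lm ord p" by (auto simp: in_keys_iff)
  ultimately show "strict_ord ord k (lm ord p)" unfolding strict_ord_def by blast
qed

section \<open>Gr\<ouml>bner bases of vanishing ideals\<close>

lemma eval_eq_zero_if_keys_in_downset:
  fixes f :: "'a::field mpoly"
  assumes gb: "groebner_basis ord (vanish_ideal n F) G"
    and downset: "\<And>a b. a \<in> monoms n \<Longrightarrow> b \<in> D \<Longrightarrow> ord a b \<Longrightarrow> a \<in> D"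
    and G_vanish: "\<And>g. g \<in> G \<Longrightarrow> lm ord g \<in> D \<Longrightarrow> eval_mpoly g h = 0"
  shows "f \<in> vanish_ideal n F \<Longrightarrow> Poly_Mapping.keys f \<subseteq> D \<Longrightarrow> eval_mpoly f h = 0"
  using wf_inv_image[OF wf_strict_ord, of "lm ord"]
proof (induction f rule: wf_induct_rule)
  case (less f)
  show ?case
  proof (cases "f = 0")
    case False
    have f: "f \<in> polys n" using less.prems(1) unfolding vanish_ideal_def by auto
    obtain g where "g \<in> G" and dvd: "mdvd (lm ord g) (lm ord f)"
      using gb less.prems(1) False unfolding groebner_basis_def by blast
    then have g_ideal: "g \<in> vanish_ideal n F" and g: "g \<in> polys n" "g \<noteq> 0"
      using groebner_basis_vanish_idealD[OF gb] by auto
    have "lm ord g \<in> D"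
      using downset[OF lm_in_monoms[OF g]] mdvd_imp_ord[OF lm_in_monoms[OF g]
          lm_in_monoms[OF f False] dvd] lm_in_keys[OF f False] less.prems(2) by blast
    then have g_h: "eval_mpoly g h = 0" using G_vanish \<open>g \<in> G\<close> by blast
    define f' where "f' = f - Poly_Mapping.single (lm ord f - lm ord g) (lc ord f / lc ord g) * g"
    have below: "strict_ord ord k (lm ord f)" if "k \<in> Poly_Mapping.keys f'" for k
      using keys_cancel_lead_below[OF f False g dvd] that unfolding f'_def .
    have f'_ideal: "f' \<in> vanish_ideal n F"
      unfolding f'_def using less.prems(1) g_ideal monoms_diff lm_in_monoms[OF f False]
      by (intro vanish_ideal_diff vanish_ideal_single_mult) auto
    then have f'_keys: "Poly_Mapping.keys f' \<subseteq> monoms n" unfolding vanish_ideal_def polys_def by auto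
    have "eval_mpoly f' h = 0"
    proof (cases "f' = 0")
      case False
      have "f' \<in> polys n" using f'_ideal unfolding vanish_ideal_def by auto
      then have "(f', f) \<in> inv_image {(a, b). a \<in> monoms n \<and> b \<in> monoms n \<and> strict_ord ord a b} (lm ord)"
        using below lm_in_keys lm_in_monoms False lm_in_monoms[OF f \<open>f \<noteq> 0\<close>] by auto
      moreover have "Poly_Mapping.keys f' \<subseteq> D"
        using below downset f'_keys lm_in_keys[OF f \<open>f \<noteq> 0\<close>] less.prems(2)
        unfolding strict_ord_def by blast
      ultimately show ?thesis using less.IH f'_ideal by blast
    qed simp
    then show ?thesis using g_h by (simp add: f'_def eval_mpoly_diff eval_mpoly_single_mult)
  qed simp
qed

lemma groebner_basis_nonvanishing_at:
  assumes gb: "groebner_basis ord (vanish_ideal n F) G"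
    and "finite F" "\<forall>x\<in>F. length x = n" "length h = n" "h \<notin> F"
  shows "\<exists>g\<in>G. eval_mpoly g h \<noteq> 0"
proof (rule ccontr)
  assume "\<not> (\<exists>g\<in>G. eval_mpoly g h \<noteq> 0)"
  moreover obtain p where p: "p \<in> polys n" "\<forall>x\<in>F. eval_mpoly p x = 0" "eval_mpoly p h \<noteq> 0"
    using exists_poly_separating_point[OF assms(2-5)] by blast
  ultimately have "eval_mpoly p h = 0"
    using eval_eq_zero_if_keys_in_downset[OF gb, of "monoms n"]
    unfolding vanish_ideal_def polys_def by blast
  with p(3) show False by contradiction
qed

lemma lm_diff_eq:
  fixes p q :: "'a::field mpoly"
  assumes p: "p \<in> polys n" "p \<noteq> 0" and q: "q \<in> polys n"
    and below: "\<And>k. k \<in> Poly_Mapping.keys q \<Longrightarrow> strict_ord ord k (lm ord p)"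
  shows "lm ord (p - q) = lm ord p" and "p - q \<noteq> 0"
proof -
  have "lm ord p \<notin> Poly_Mapping.keys q" using below unfolding strict_ord_def by blast
  then have lead: "lm ord p \<in> Poly_Mapping.keys (p - q)"
    using lm_in_keys[OF p] by (simp add: in_keys_iff lookup_minus)
  have "ord k (lm ord p)" if "k \<in> Poly_Mapping.keys (p - q)" for k
    using that keys_diff[of p q] ord_lm[OF p] below unfolding strict_ord_def by blast
  moreover have "Poly_Mapping.keys (p - q) \<subseteq> monoms n"
    using polys_diff[OF p(1) q] unfolding polys_def by blast
  ultimately show "lm ord (p - q) = lm ord p" using lm_eqI lead by blast
  show "p - q \<noteq> 0" using lead by auto
qed

lemma lm_in_Sm_insert:
  fixes q :: "'a::field mpoly"
  assumes gb: "groebner_basis ord (vanish_ideal n F) G"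
    and "q \<in> G" and q_h: "eval_mpoly q h \<noteq> 0"
    and below_vanish: "\<And>g. g \<in> G \<Longrightarrow> strict_ord ord (lm ord g) (lm ord q) \<Longrightarrow> eval_mpoly g h = 0"
  shows "lm ord q \<in> Sm n ord (insert h F)"
proof -
  have q_ideal: "q \<in> vanish_ideal n F" and q: "q \<in> polys n" "q \<noteq> 0"
    using groebner_basis_vanish_idealD[OF gb \<open>q \<in> G\<close>] by auto
  have "f = 0" if f_ideal: "f \<in> vanish_ideal n (insert h F)" and lm_f: "lm ord f = lm ord q" for f
  proof (rule ccontr)
    assume "f \<noteq> 0"
    have f: "f \<in> polys n" using f_ideal unfolding vanish_ideal_def by auto
    let ?c = "lc ord f / lc ord q"
    define f' where "f' = f - Poly_Mapping.single (lm ord f - lm ord q) ?c * q"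
    have f'_ideal: "f' \<in> vanish_ideal n F"
      using f_ideal q_ideal monoms_zero unfolding f'_def lm_f vanish_ideal_insert
      by (intro vanish_ideal_diff vanish_ideal_single_mult) auto
    let ?D = "{k \<in> monoms n. strict_ord ord k (lm ord q)}"
    have "mdvd (lm ord q) (lm ord f)" using lm_f mdvd_refl by simp
    from keys_cancel_lead_below[OF f \<open>f \<noteq> 0\<close> q this, folded f'_def, unfolded lm_f]
    have "Poly_Mapping.keys f' \<subseteq> ?D"
      using f'_ideal unfolding vanish_ideal_def polys_def by blast
    moreover have "a \<in> ?D" if "a \<in> monoms n" "b \<in> ?D" "ord a b" for a b
      using that strict_ord_ord_trans lm_in_monoms[OF q] by blast
    ultimately have "eval_mpoly f' h = 0"
      using eval_eq_zero_if_keys_in_downset[OF gb, of ?D] below_vanish f'_ideal by blast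
    moreover have "eval_mpoly f' h = - ?c * eval_mpoly q h"
      using f_ideal unfolding f'_def lm_f vanish_ideal_insert
      by (simp add: eval_mpoly_diff eval_mpoly_single_mult eval_monom_def)
    ultimately show False
      using q_h lc_nonzero[OF f \<open>f \<noteq> 0\<close>] lc_nonzero[OF q] by simp
  qed
  then show ?thesis unfolding Sm_def using lm_in_monoms[OF q] by blast
qed

lemma Sm_insert_subset:
  fixes q :: "'a::field mpoly"
  assumes gb: "groebner_basis ord (vanish_ideal n F) G"
    and "q \<in> G" and q_h: "eval_mpoly q h \<noteq> 0"
    and below_vanish: "\<And>g. g \<in> G \<Longrightarrow> strict_ord ord (lm ord g) (lm ord q) \<Longrightarrow> eval_mpoly g h = 0"
  shows "Sm n ord (insert h F) \<subseteq> Sm n ord F \<union> {lm ord q}"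
proof
  fix m assume m_Sm: "m \<in> Sm n ord (insert h F)"
  have q_ideal: "q \<in> vanish_ideal n F" and q: "q \<in> polys n" "q \<noteq> 0"
    using groebner_basis_vanish_idealD[OF gb \<open>q \<in> G\<close>] by auto
  show "m \<in> Sm n ord F \<union> {lm ord q}"
  proof (rule ccontr)
    assume "m \<notin> Sm n ord F \<union> {lm ord q}"
    then obtain f where f_ideal: "f \<in> vanish_ideal n F" and "f \<noteq> 0" and lm_f: "lm ord f = m"
      and "m \<noteq> lm ord q"
      using m_Sm unfolding Sm_def by blast
    have f: "f \<in> polys n" using f_ideal unfolding vanish_ideal_def by auto
    have m: "m \<in> monoms n" using lm_in_monoms[OF f \<open>f \<noteq> 0\<close>] lm_f by simp
    have "\<exists>f'\<in>vanish_ideal n (insert h F). f' \<noteq> 0 \<and> lm ord f' = m"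
    proof (cases "ord m (lm ord q)")
      case True
      obtain g where "g \<in> G" and dvd: "mdvd (lm ord g) m"
        using gb f_ideal \<open>f \<noteq> 0\<close> lm_f unfolding groebner_basis_def by blast
      then have g_ideal: "g \<in> vanish_ideal n F" and g: "g \<in> polys n" "g \<noteq> 0"
        using groebner_basis_vanish_idealD[OF gb] by auto
      have "strict_ord ord (lm ord g) (lm ord q)"
        using strict_ord_ord_trans[OF lm_in_monoms[OF g] m lm_in_monoms[OF q]]
          mdvd_imp_ord[OF lm_in_monoms[OF g] m dvd] True \<open>m \<noteq> lm ord q\<close>
        unfolding strict_ord_def by blast
      then have "g \<in> vanish_ideal n (insert h F)"
        using below_vanish \<open>g \<in> G\<close> g_ideal unfolding vanish_ideal_insert by blast
      moreover have "(m - lm ord g) + lm ord g = m"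
        using mdvd_add_diff[OF dvd] by (simp add: add.commute)
      ultimately show ?thesis
        using vanish_ideal_single_mult[OF monoms_diff[OF m]] lm_single_mult[OF monoms_diff[OF m] _ g]
          keys_single_mult_eq[of 1 "m - lm ord g" g] \<open>g \<noteq> 0\<close>
        by (intro bexI[of _ "Poly_Mapping.single (m - lm ord g) 1 * g"]) auto
    next
      case False
      then have q_below: "strict_ord ord k m" if "k \<in> Poly_Mapping.keys q" for k
        using that strict_ord_ord_trans[OF _ lm_in_monoms[OF q] m] ord_lm[OF q]
          ord_total[OF m lm_in_monoms[OF q]] q unfolding strict_ord_def polys_def by blast
      define f' where "f' = f - Poly_Mapping.single 0 (eval_mpoly f h / eval_mpoly q h) * q"
      have "f' \<in> vanish_ideal n (insert h F)"
        using f_ideal q_ideal q_h monoms_zero unfolding f'_def vanish_ideal_insert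
        by (auto intro!: vanish_ideal_diff vanish_ideal_single_mult
            simp: eval_mpoly_diff eval_mpoly_single_mult eval_monom_def)
      moreover have "lm ord f' = m" "f' \<noteq> 0"
      proof -
        let ?c = "eval_mpoly f h / eval_mpoly q h"
        have "strict_ord ord k (lm ord f)" if "k \<in> Poly_Mapping.keys (Poly_Mapping.single 0 ?c * q)" for k
          using that keys_single_mult[of 0 ?c q] q_below lm_f by auto
        from lm_diff_eq[OF f \<open>f \<noteq> 0\<close> polys_single_mult[OF monoms_zero q(1)] this]
        show "lm ord f' = m" "f' \<noteq> 0" unfolding f'_def lm_f by auto
      qed
      ultimately show ?thesis by blast
    qed
    then show False using m_Sm unfolding Sm_def by blast
  qed
qed

lemma Sm_insert_eq:
  fixes q :: "'a::field mpoly"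
  assumes "groebner_basis ord (vanish_ideal n F) G"
    and "q \<in> G" and "eval_mpoly q h \<noteq> 0"
    and "\<And>g. g \<in> G \<Longrightarrow> strict_ord ord (lm ord g) (lm ord q) \<Longrightarrow> eval_mpoly g h = 0"
  shows "Sm n ord (insert h F) = Sm n ord F \<union> {lm ord q}"
  using Sm_mono[of F "insert h F"] lm_in_Sm_insert[OF assms] Sm_insert_subset[OF assms] by blast

lemma strict_ord_chain:
  assumes "\<And>j. j \<in> {1..s} \<Longrightarrow> u j \<in> monoms n"
    and "\<forall>j\<in>{1..<s}. strict_ord ord (u j) (u (Suc j))"
  shows "1 \<le> j \<Longrightarrow> j < k \<Longrightarrow> k \<le> s \<Longrightarrow> strict_ord ord (u j) (u k)"
proof (induction k)
  case (Suc k)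
  show ?case
  proof (cases "j = k")
    case False
    then have "strict_ord ord (u j) (u k)" using Suc by simp
    moreover have "strict_ord ord (u k) (u (Suc k))" using assms(2) Suc.prems False by auto
    moreover have "u j \<in> monoms n" "u k \<in> monoms n" "u (Suc k) \<in> monoms n"
      using assms(1) Suc.prems False by auto
    ultimately show ?thesis using strict_ord_trans by blast
  qed (use assms(2) Suc.prems in auto)
qed simp

lemma strict_ord_chain_index_less:
  assumes "\<And>j. j \<in> {1..s} \<Longrightarrow> u j \<in> monoms n"
    and "\<forall>j\<in>{1..<s}. strict_ord ord (u j) (u (Suc j))"
    and "j \<in> {1..s}" "k \<in> {1..s}" "strict_ord ord (u j) (u k)"
  shows "j < k"
proof (rule ccontr)
  assume "\<not> j < k"
  then consider "k = j" | "k < j" by linarith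
  then show False
  proof cases
    case 1
    then show False using assms(5) unfolding strict_ord_def by simp
  next
    case 2
    then have "strict_ord ord (u k) (u j)" using strict_ord_chain[OF assms(1,2)] assms(3,4) by auto
    then show False using strict_ord_asym assms unfolding strict_ord_def by blast
  qed
qed

end

theorem mainTheorem4:
  fixes n :: nat
    and ord :: "monom \<Rightarrow> monom \<Rightarrow> bool"
    and F :: "('a::field) list set"
    and h :: "'a list"
    and g :: "nat \<Rightarrow> 'a mpoly"
    and s :: nat
  assumes "term_order n ord"
    and "finite F"
    and "\<forall>x\<in>F. length x = n"
    and "length h = n"
    and "h \<notin> F"
    and "reduced_groebner_basis ord (vanish_ideal n F) (g ` {1..s})"
    and "\<forall>j\<in>{1..<s}. strict_ord ord (lm ord (g j)) (lm ord (g (Suc j)))"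
  shows "Sm n ord (insert h F) =
           Sm n ord F \<union> {lm ord (g (LEAST j. j \<in> {1..s} \<and> eval_mpoly (g j) h \<noteq> 0))}"
proof -
  interpret term_order_on n ord by (rule term_order_on.intro) (fact assms(1))
  let ?nonvanishing = "\<lambda>j. j \<in> {1..s} \<and> eval_mpoly (g j) h \<noteq> 0"
  define i where "i = (LEAST j. ?nonvanishing j)"
  have gb: "groebner_basis ord (vanish_ideal n F) (g ` {1..s})"
    using assms(6) unfolding reduced_groebner_basis_def by blast
  have lm_monoms: "lm ord (g j) \<in> monoms n" if "j \<in> {1..s}" for j
    using lm_in_monoms groebner_basis_vanish_idealD[OF gb] that by blast
  have "\<exists>j. ?nonvanishing j"
    using groebner_basis_nonvanishing_at[OF gb assms(2-5)] by blast
  then have i: "?nonvanishing i" unfolding i_def by (rule LeastI_ex)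
  have "eval_mpoly (g j) h = 0"
    if "j \<in> {1..s}" "strict_ord ord (lm ord (g j)) (lm ord (g i))" for j
    using strict_ord_chain_index_less[OF lm_monoms assms(7) that(1) _ that(2)] i
      not_less_Least[of j ?nonvanishing] that(1) unfolding i_def by blast
  then show ?thesis
    using Sm_insert_eq[OF gb, of "g i" h] i unfolding i_def by blast
qed

end
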